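(* Let $\zeta\in\mathbb{C}^*$. The set $\{\mathcal{S}_{\frac rs}(\zeta) : \frac rs>1\}$ (which equals $\{\mathcal{R}_{\frac rs}(\zeta) : \frac rs>1\}$) is finite if and only if $\zeta$ is a primitive $n$-th root of unity for some $n\in\{2,3,4,5\}$.
   Context: Let $q$ be a formal parameter, $R_q=\begin{pmatrix} q & 1\\ 0 & 1\end{pmatrix}$, $S_q=\begin{pmatrix} 0 & -q^{-1}\\ 1 & 0\end{pmatrix}$, and for integers $c_1,\dots,c_k$ put $M_q(c_1,\dots,c_k)=R_q^{c_1}S_q\cdots R_q^{c_k}S_q$. Every irreducible fraction $\frac{r}{s}>1$ ($r,s$ positive coprime integers) has a unique negative continued fraction expansion $\frac{r}{s}=c_1-\cfrac{1}{c_2-\cfrac{1}{\ddots-\cfrac{1}{c_k}}}$ with all $c_i\ge 2$; define polynomials $\mathcal{R}_{\frac rs}(q),\mathcal{S}_{\frac rs}(q)$ by $M_q(c_1,\dots,c_k)=\begin{pmatrix}\mathcal{R}_{\frac rs}(q) & *\\ \mathcal{S}_{\frac rs}(q) & *\end{pmatrix}$. *)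

theory Defs
  imports Complex_Main
begin

text \<open>2x2 complex matrices, written (a, b, c, d) for the matrix with rows (a b) and (c d).\<close>
type_synonym mat2 = "complex \<times> complex \<times> complex \<times> complex"

fun mat2_mult :: "mat2 \<Rightarrow> mat2 \<Rightarrow> mat2" where
  "mat2_mult (a, b, c, d) (a', b', c', d') =
     (a * a' + b * c', a * b' + b * d', c * a' + d * c', c * b' + d * d')"

definition mat2_id :: mat2 where "mat2_id = (1, 0, 0, 1)"

fun mat2_pow :: "mat2 \<Rightarrow> nat \<Rightarrow> mat2" where
  "mat2_pow A 0 = mat2_id"
| "mat2_pow A (Suc n) = mat2_mult A (mat2_pow A n)"

definition Rq :: "complex \<Rightarrow> mat2" where "Rq q = (q, 1, 0, 1)"
definition Sq :: "complex \<Rightarrow> mat2" where "Sq q = (0, - inverse q, 1, 0)"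

fun Mq :: "complex \<Rightarrow> int list \<Rightarrow> mat2" where
  "Mq q [] = mat2_id"
| "Mq q (c # cs) = mat2_mult (mat2_mult (mat2_pow (Rq q) (nat c)) (Sq q)) (Mq q cs)"

fun ncf :: "int list \<Rightarrow> rat" where
  "ncf [] = 0"
| "ncf [c] = of_int c"
| "ncf (c # cs) = of_int c - 1 / ncf cs"

definition ncf_expansion :: "rat \<Rightarrow> int list" where
  "ncf_expansion x = (THE cs. cs \<noteq> [] \<and> (\<forall>c\<in>set cs. c \<ge> 2) \<and> ncf cs = x)"

definition Rpoly :: "rat \<Rightarrow> complex \<Rightarrow> complex" where
  "Rpoly x q = fst (Mq q (ncf_expansion x))"
definition Spoly :: "rat \<Rightarrow> complex \<Rightarrow> complex" where
  "Spoly x q = fst (snd (snd (Mq q (ncf_expansion x))))"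

definition primitive_root_of_unity :: "nat \<Rightarrow> complex \<Rightarrow> bool" where
  "primitive_root_of_unity n z \<longleftrightarrow> n > 0 \<and> z ^ n = 1 \<and> (\<forall>m. 0 < m \<and> m < n \<longrightarrow> z ^ m \<noteq> 1)"

end

theory Submission
  imports Defs
begin

(*
  If \<zeta> = 1 or \<zeta> is not a root of unity, the expansions [2, ..., 2] of (k + 1)/k already give
  infinitely many values S = 1 + \<zeta> + ... + \<zeta>^(k-1).

  If \<zeta> has order n \<ge> 2, then R^n = 1 and M(n) = S, and every entry of a matrix
  M(c_1, ..., c_k) is a value of S. Finitely many such values thus make the matrices M(c) a
  finite subgroup of GL_2(C), in which every element has tr^2/det in [0, 4]. The group contains
  A = M(j + n, n) = -\<zeta>^-1 R^j and its conjugate B by S. For n = 6 and j = 1 the commutator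
  [A, B] is a nontrivial unipotent. For n \<ge> 7, choosing \<zeta>^j = exp(2 pi i/n), Jorgensen's
  recursion for \<beta>(A, B) = tr [A, B] - 2 under B \<mapsto> B A B^-1 yields infinitely many distinct
  commutator traces.

  Conversely, for n = 2, ..., 5 the column M(c) (1, 0), whose second entry is S, runs up to
  factors \<plusminus>\<zeta>^k through an explicit finite orbit of the group generated by R and S.
*)

lemma mat2_mult_assoc: "mat2_mult (mat2_mult A B) C = mat2_mult A (mat2_mult B C)"
  by (cases A; cases B; cases C) (simp add: algebra_simps)

lemma mat2_mult_id_left [simp]: "mat2_mult mat2_id A = A"
  by (cases A) (simp add: mat2_id_def)

lemma mat2_mult_id_right [simp]: "mat2_mult A mat2_id = A"
  by (cases A) (simp add: mat2_id_def)

lemma mat2_pow_add: "mat2_pow A (m + k) = mat2_mult (mat2_pow A m) (mat2_pow A k)"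
  by (induction m) (simp_all add: mat2_mult_assoc)

fun mat2_tr :: "mat2 \<Rightarrow> complex" where
  "mat2_tr (a, b, c, d) = a + d"

fun mat2_det :: "mat2 \<Rightarrow> complex" where
  "mat2_det (a, b, c, d) = a * d - b * c"

fun mat2_adj :: "mat2 \<Rightarrow> mat2" where
  "mat2_adj (a, b, c, d) = (d, - b, - c, a)"

fun mat2_scale :: "complex \<Rightarrow> mat2 \<Rightarrow> mat2" where
  "mat2_scale s (a, b, c, d) = (s * a, s * b, s * c, s * d)"

definition mat2_inv :: "mat2 \<Rightarrow> mat2" where
  "mat2_inv X = mat2_scale (1 / mat2_det X) (mat2_adj X)"

definition mat2_comm :: "mat2 \<Rightarrow> mat2 \<Rightarrow> mat2" where
  "mat2_comm X Y = mat2_mult (mat2_mult X Y) (mat2_mult (mat2_inv X) (mat2_inv Y))"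

lemma mat2_det_mult: "mat2_det (mat2_mult X Y) = mat2_det X * mat2_det Y"
  by (cases X; cases Y) (simp add: algebra_simps)

lemma mat2_mult_scale_left: "mat2_mult (mat2_scale s X) Y = mat2_scale s (mat2_mult X Y)"
  by (cases X; cases Y) (simp add: algebra_simps)

lemma mat2_mult_scale_right: "mat2_mult X (mat2_scale s Y) = mat2_scale s (mat2_mult X Y)"
  by (cases X; cases Y) (simp add: algebra_simps)

lemma mat2_scale_scale: "mat2_scale s (mat2_scale t X) = mat2_scale (s * t) X"
  by (cases X) (simp add: algebra_simps)

lemma mat2_tr_scale: "mat2_tr (mat2_scale s X) = s * mat2_tr X"
  by (cases X) (simp add: algebra_simps)

lemma mat2_det_scale: "mat2_det (mat2_scale s X) = s\<^sup>2 * mat2_det X"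
  by (cases X) (simp add: algebra_simps power2_eq_square)

lemma mat2_mult_adj_left: "mat2_mult (mat2_adj X) X = (mat2_det X, 0, 0, mat2_det X)"
  by (cases X) (simp add: algebra_simps)

lemma mat2_det_adj: "mat2_det (mat2_adj X) = mat2_det X"
  by (cases X) (simp add: algebra_simps)

lemma mat2_det_inv: "mat2_det X \<noteq> 0 \<Longrightarrow> mat2_det (mat2_inv X) = 1 / mat2_det X"
  by (simp add: mat2_inv_def mat2_det_scale mat2_det_adj power2_eq_square)

lemma mat2_mult_inv_left: "mat2_det X \<noteq> 0 \<Longrightarrow> mat2_mult (mat2_inv X) X = mat2_id"
  by (simp add: mat2_inv_def mat2_mult_scale_left mat2_mult_adj_left mat2_id_def)

lemma mat2_inv_unique:
  assumes "mat2_det X \<noteq> 0" and "mat2_mult X Y = mat2_id"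
  shows "Y = mat2_inv X"
proof -
  have "mat2_inv X = mat2_mult (mat2_mult (mat2_inv X) X) Y"
    using assms by (simp add: mat2_mult_assoc)
  then show ?thesis
    using assms(1) by (simp add: mat2_mult_inv_left)
qed

lemma mat2_inv_scale:
  assumes "s \<noteq> 0"
  shows "mat2_inv (mat2_scale s X) = mat2_scale (1 / s) (mat2_inv X)"
proof -
  have "1 / (s\<^sup>2 * mat2_det X) * s = 1 / s * (1 / mat2_det X)"
    using assms by (simp add: power2_eq_square)
  moreover have "mat2_adj (mat2_scale s X) = mat2_scale s (mat2_adj X)"
    by (cases X) simp
  ultimately show ?thesis
    by (simp add: mat2_inv_def mat2_det_scale mat2_scale_scale)
qed

lemma mat2_det_comm:
  "mat2_det X \<noteq> 0 \<Longrightarrow> mat2_det Y \<noteq> 0 \<Longrightarrow> mat2_det (mat2_comm X Y) = 1"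
  by (simp add: mat2_comm_def mat2_det_mult mat2_det_inv)

lemma mat2_comm_eq_id_imp_commute:
  assumes "mat2_det A \<noteq> 0" "mat2_det B \<noteq> 0" and "mat2_comm A B = mat2_id"
  shows "mat2_mult A B = mat2_mult B A"
proof -
  have "mat2_mult A B = mat2_mult (mat2_comm A B) (mat2_mult B A)"
    using assms(1,2) by (simp add: mat2_comm_def mat2_mult_assoc mat2_mult_inv_left
        flip: mat2_mult_assoc[of "mat2_inv B" B A])
  then show ?thesis
    using assms(3) by simp
qed

fun mat2_apply :: "mat2 \<Rightarrow> complex \<times> complex \<Rightarrow> complex \<times> complex" where
  "mat2_apply (a, b, c, d) (x, y) = (a * x + b * y, c * x + d * y)"

lemma mat2_apply_mult: "mat2_apply (mat2_mult A B) v = mat2_apply A (mat2_apply B v)"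
  by (cases A; cases B; cases v) (simp add: algebra_simps)

lemma mat2_apply_id [simp]: "mat2_apply mat2_id v = v"
  by (cases v) (simp add: mat2_id_def)

lemma mat2_apply_scaled:
  "mat2_apply X (u * x, u * y) = (u * fst (mat2_apply X (x, y)), u * snd (mat2_apply X (x, y)))"
  by (cases X) (simp add: algebra_simps)

section \<open>Jorgensen's trace parameters\<close>

text \<open>Scale-invariant forms of Jorgensen's parameters \<open>\<beta>(A) = tr\<^sup>2 A - 4\<close> and
  \<open>\<beta>(A, B) = tr [A, B] - 2\<close> of matrices in \<open>SL\<^sub>2(\<complex>)\<close>; the first becomes \<open>mat2_tau A - 4\<close>.\<close>

definition mat2_tau :: "mat2 \<Rightarrow> complex" where
  "mat2_tau X = mat2_tr X ^ 2 / mat2_det X"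

definition mat2_beta :: "mat2 \<Rightarrow> mat2 \<Rightarrow> complex" where
  "mat2_beta X Y = mat2_tr (mat2_comm X Y) - 2"

lemma mat2_tau_scale: "s \<noteq> 0 \<Longrightarrow> mat2_tau (mat2_scale s X) = mat2_tau X"
  by (simp add: mat2_tau_def mat2_tr_scale mat2_det_scale power_mult_distrib)

lemma mat2_comm_scale:
  assumes "s \<noteq> 0" "t \<noteq> 0"
  shows "mat2_comm (mat2_scale s X) (mat2_scale t Y) = mat2_comm X Y"
proof -
  have "mat2_comm (mat2_scale s X) (mat2_scale t Y) =
      mat2_scale (s * t * (1 / s) * (1 / t)) (mat2_comm X Y)"
    by (simp add: mat2_comm_def mat2_inv_scale assms mat2_mult_scale_left mat2_mult_scale_right
        mat2_scale_scale mult_ac)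
  then show ?thesis
    using assms by (cases "mat2_comm X Y") simp
qed

lemma mat2_beta_scale:
  "s \<noteq> 0 \<Longrightarrow> t \<noteq> 0 \<Longrightarrow> mat2_beta (mat2_scale s X) (mat2_scale t Y) = mat2_beta X Y"
  by (simp add: mat2_beta_def mat2_comm_scale)

lemma mat2_tr_comm:
  assumes "mat2_det X \<noteq> 0" "mat2_det Y \<noteq> 0"
  shows "mat2_tr (mat2_comm X Y) =
    (mat2_tr X ^ 2 * mat2_det Y + mat2_tr Y ^ 2 * mat2_det X + mat2_tr (mat2_mult X Y) ^ 2
     - mat2_tr X * mat2_tr Y * mat2_tr (mat2_mult X Y) - 2 * mat2_det X * mat2_det Y)
    / (mat2_det X * mat2_det Y)"
proof -
  have "mat2_tr (mat2_mult (mat2_mult X Y) (mat2_mult (mat2_adj X) (mat2_adj Y))) =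
    mat2_tr X ^ 2 * mat2_det Y + mat2_tr Y ^ 2 * mat2_det X + mat2_tr (mat2_mult X Y) ^ 2
     - mat2_tr X * mat2_tr Y * mat2_tr (mat2_mult X Y) - 2 * mat2_det X * mat2_det Y"
    by (cases X; cases Y) (simp add: algebra_simps power2_eq_square)
  then show ?thesis
    by (simp add: mat2_comm_def mat2_inv_def mat2_mult_scale_left mat2_mult_scale_right
        mat2_scale_scale mat2_tr_scale)
qed

lemma mat2_conj_eq_scale:
  "mat2_mult (mat2_mult B A) (mat2_inv B) =
    mat2_scale (1 / mat2_det B) (mat2_mult (mat2_mult B A) (mat2_adj B))"
  by (simp add: mat2_inv_def mat2_mult_scale_right)

lemma mat2_tr_conj:
  assumes "mat2_det B \<noteq> 0"
  shows "mat2_tr (mat2_mult (mat2_mult B A) (mat2_inv B)) = mat2_tr A"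
proof -
  have "mat2_tr (mat2_mult (mat2_mult B A) (mat2_adj B)) = mat2_tr A * mat2_det B"
    by (cases A; cases B) (simp add: algebra_simps)
  then show ?thesis
    using assms by (simp add: mat2_conj_eq_scale mat2_tr_scale)
qed

lemma mat2_det_conj:
  "mat2_det B \<noteq> 0 \<Longrightarrow> mat2_det (mat2_mult (mat2_mult B A) (mat2_inv B)) = mat2_det A"
  by (simp add: mat2_det_mult mat2_det_inv)

lemma mat2_tau_conj:
  "mat2_det B \<noteq> 0 \<Longrightarrow> mat2_tau (mat2_mult (mat2_mult B A) (mat2_inv B)) = mat2_tau A"
  by (simp add: mat2_tau_def mat2_tr_conj mat2_det_conj)

lemma mat2_beta_conj:
  assumes dA: "mat2_det A \<noteq> 0" and dB: "mat2_det B \<noteq> 0"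
  shows "mat2_beta A (mat2_mult (mat2_mult B A) (mat2_inv B)) =
    mat2_beta A B * (mat2_beta A B - (mat2_tau A - 4))"
proof -
  define B' where "B' = mat2_mult (mat2_mult B A) (mat2_inv B)"
  have "mat2_tr (mat2_mult A (mat2_mult (mat2_mult B A) (mat2_adj B))) =
    mat2_tr B * mat2_tr A * mat2_tr (mat2_mult A B) - mat2_det A * mat2_tr B ^ 2
    - mat2_tr (mat2_mult A B) ^ 2 + 2 * mat2_det A * mat2_det B"
    by (cases A; cases B) (simp add: algebra_simps power2_eq_square)
  then have trAB': "mat2_tr (mat2_mult A B') =
    (mat2_tr B * mat2_tr A * mat2_tr (mat2_mult A B) - mat2_det A * mat2_tr B ^ 2
     - mat2_tr (mat2_mult A B) ^ 2 + 2 * mat2_det A * mat2_det B) / mat2_det B"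
    by (simp add: B'_def mat2_conj_eq_scale mat2_mult_scale_right mat2_tr_scale)
  have trB': "mat2_tr B' = mat2_tr A" and dB': "mat2_det B' = mat2_det A"
    using dB by (simp_all add: B'_def mat2_tr_conj mat2_det_conj)
  show ?thesis
    unfolding B'_def[symmetric] mat2_beta_def mat2_tau_def
    using dA dB dB' by (simp add: mat2_tr_comm trB' trAB') (simp add: field_simps power2_eq_square)
qed

lemma Reals_of_square_nonneg:
  fixes z :: complex
  assumes "z\<^sup>2 = of_real r" and "0 \<le> r"
  shows "z \<in> \<real>"
proof -
  have re: "Re z * Re z - Im z * Im z = r" and im: "Re z * Im z + Im z * Re z = 0"
    using arg_cong[OF assms(1), of Re] arg_cong[OF assms(1), of Im]
    by (simp_all add: power2_eq_square)
  have "Im z = 0"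
  proof (rule ccontr)
    assume "Im z \<noteq> 0"
    then have "Re z = 0"
      using im by simp
    moreover have "0 < Im z * Im z"
      using \<open>Im z \<noteq> 0\<close> not_real_square_gt_zero by blast
    ultimately show False
      using re assms(2) by simp
  qed
  then show ?thesis
    by (simp add: complex_is_Real_iff)
qed

text \<open>With \<open>x, y, z\<close> the traces of \<open>A, B, AB\<close> normalised to determinant \<open>1\<close>, Fricke's identity
  reads \<open>\<beta> = x\<^sup>2 + y\<^sup>2 + z\<^sup>2 - x y z - 4 = (z - x y / 2)\<^sup>2 - (4 - x\<^sup>2) (4 - y\<^sup>2) / 4\<close>.\<close>

lemma mat2_beta_lower_bound:
  assumes dA: "mat2_det A \<noteq> 0" and dB: "mat2_det B \<noteq> 0"
    and tA: "mat2_tau A = of_real s" and tB: "mat2_tau B = of_real t"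
    and tAB: "mat2_tau (mat2_mult A B) = of_real u"
    and "0 \<le> s" "0 \<le> t" "0 \<le> u"
  shows "- ((4 - s) * (4 - t)) / 4 \<le> Re (mat2_beta A B)"
proof -
  define a where "a = csqrt (mat2_det A)"
  define b where "b = csqrt (mat2_det B)"
  have a2: "a\<^sup>2 = mat2_det A" and b2: "b\<^sup>2 = mat2_det B"
    by (simp_all add: a_def b_def)
  then have "a \<noteq> 0" "b \<noteq> 0"
    using dA dB by auto
  define x where "x = mat2_tr A / a"
  define y where "y = mat2_tr B / b"
  define z where "z = mat2_tr (mat2_mult A B) / (a * b)"
  have x2: "x\<^sup>2 = of_real s" and y2: "y\<^sup>2 = of_real t" and z2: "z\<^sup>2 = of_real u"
    using tA tB tAB a2 b2
    by (simp_all add: x_def y_def z_def mat2_tau_def power_divide mat2_det_mult power_mult_distrib)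
  obtain X Y Z where xX: "x = of_real X" and yY: "y = of_real Y" and zZ: "z = of_real Z"
    using Reals_of_square_nonneg[OF x2] Reals_of_square_nonneg[OF y2] Reals_of_square_nonneg[OF z2]
      \<open>0 \<le> s\<close> \<open>0 \<le> t\<close> \<open>0 \<le> u\<close> by (metis Reals_cases)
  have "X\<^sup>2 = s" "Y\<^sup>2 = t"
    using x2 y2 xX yY by (metis of_real_eq_iff of_real_power)+
  have "mat2_beta A B = x\<^sup>2 + y\<^sup>2 + z\<^sup>2 - x * y * z - 4"
    using \<open>a \<noteq> 0\<close> \<open>b \<noteq> 0\<close> dA dB
    by (simp add: mat2_beta_def mat2_tr_comm x_def y_def z_def flip: a2 b2)
      (simp add: field_simps power2_eq_square)
  also have "\<dots> = of_real (X\<^sup>2 + Y\<^sup>2 + Z\<^sup>2 - X * Y * Z - 4)"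
    by (simp add: xX yY zZ)
  finally have "Re (mat2_beta A B) = X\<^sup>2 + Y\<^sup>2 + Z\<^sup>2 - X * Y * Z - 4"
    by simp
  also have "\<dots> = (Z - X * Y / 2)\<^sup>2 - (4 - X\<^sup>2) * (4 - Y\<^sup>2) / 4"
    by (simp add: field_simps power2_eq_square)
  finally have "Re (mat2_beta A B) = (Z - X * Y / 2)\<^sup>2 - (4 - s) * (4 - t) / 4"
    using \<open>X\<^sup>2 = s\<close> \<open>Y\<^sup>2 = t\<close> by simp
  then show ?thesis
    using zero_le_power2[of "Z - X * Y / 2"] by linarith
qed

lemma strict_mono_quadratic_recurrence:
  fixes g :: "nat \<Rightarrow> real"
  assumes rec: "\<And>k. g (Suc k) = g k * (g k - c)"
    and lower: "\<And>k. - (c\<^sup>2 / 4) \<le> g k" and nonpos: "\<And>k. g k \<le> 0"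
    and "g 0 \<noteq> 0" and c: "-1 < c" "c < 0"
  shows "strict_mono g"
proof -
  have "c * (c + 4) < 0"
    using c by (intro mult_neg_pos) simp_all
  then have "c < - (c\<^sup>2 / 4)"
    by (simp add: power2_eq_square algebra_simps)
  then have gap: "0 < g k - c" and "g k - c < 1" for k
    using lower[of k] nonpos[of k] c by linarith+
  have neg: "g k < 0" for k
  proof (induction k)
    case 0
    then show ?case
      using \<open>g 0 \<noteq> 0\<close> nonpos[of 0] by simp
  next
    case (Suc k)
    then show ?case
      using gap[of k] by (simp add: rec mult_neg_pos)
  qed
  have "g k < g (Suc k)" for k
    using mult_strict_left_mono_neg[OF \<open>g k - c < 1\<close> neg[of k]] by (simp add: rec)
  then show ?thesis
    by (simp add: strict_mono_Suc_iff)
qed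

lemma mat2_eigenvector_exists:
  assumes "(a - l) * (d - l) = b * c"
  obtains x y where "(x, y) \<noteq> (0, 0)" "mat2_apply (a, b, c, d) (x, y) = (l * x, l * y)"
proof (cases "b = 0 \<and> c = 0")
  case True
  then have "a = l \<or> d = l"
    using assms by simp
  then show ?thesis
    using True that[of 1 0] that[of 0 1] by auto
next
  case False
  then show ?thesis
    using assms that[of b "l - a"] that[of "l - d" c] by (auto simp: algebra_simps)
qed

lemma mat2_apply_pow_eigenvector:
  assumes "mat2_apply X (x, y) = (l * x, l * y)"
  shows "mat2_apply (mat2_pow X m) (x, y) = (l ^ m * x, l ^ m * y)"
proof (induction m)
  case (Suc m)
  then show ?case
    using mat2_apply_scaled[of X "l ^ m" x y] assms by (simp add: mat2_apply_mult mult_ac)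
qed simp

lemma eigenvalue_pow_eq_1:
  assumes "mat2_pow (a, b, c, d) m = mat2_id" and "(a - l) * (d - l) = b * c"
  shows "l ^ m = 1"
proof -
  obtain x y where "(x, y) \<noteq> (0, 0)" and "mat2_apply (a, b, c, d) (x, y) = (l * x, l * y)"
    using mat2_eigenvector_exists[OF assms(2)] by blast
  then have "(x, y) = (l ^ m * x, l ^ m * y)"
    using mat2_apply_pow_eigenvector assms(1) by (metis mat2_apply_id)
  then have "(l ^ m - 1) * x = 0" "(l ^ m - 1) * y = 0"
    by (simp_all add: algebra_simps)
  with \<open>(x, y) \<noteq> (0, 0)\<close> show ?thesis
    by auto
qed

text \<open>With eigenvalues \<open>\<lambda>\<^sub>1, \<lambda>\<^sub>2\<close> on the unit circle,
  \<open>tr\<^sup>2/det = \<lambda>\<^sub>1/\<lambda>\<^sub>2 + \<lambda>\<^sub>2/\<lambda>\<^sub>1 + 2 = 2 Re (\<lambda>\<^sub>1/\<lambda>\<^sub>2) + 2\<close>.\<close>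

lemma mat2_tau_of_finite_order:
  assumes X: "mat2_pow X m = mat2_id" and "0 < m" and "mat2_det X \<noteq> 0"
  obtains r where "mat2_tau X = of_real r" "0 \<le> r" "r \<le> 4"
proof -
  obtain a b c d where Xe: "X = (a, b, c, d)"
    by (cases X) auto
  define s where "s = csqrt ((a + d)\<^sup>2 - 4 * (a * d - b * c))"
  define l1 where "l1 = (a + d + s) / 2"
  define l2 where "l2 = (a + d - s) / 2"
  have "s\<^sup>2 = (a + d)\<^sup>2 - 4 * (a * d - b * c)"
    by (simp add: s_def)
  then have sum: "l1 + l2 = a + d" and prod: "l1 * l2 = a * d - b * c"
    by (simp_all add: l1_def l2_def field_simps power2_eq_square)
  have "(a - l1) * (d - l1) = b * c" "(a - l2) * (d - l2) = b * c"
    using sum prod by algebra+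
  then have "l1 ^ m = 1" "l2 ^ m = 1"
    using eigenvalue_pow_eq_1 X Xe by blast+
  then have n1: "norm l1 = 1" and n2: "norm l2 = 1"
    using \<open>0 < m\<close> power_eq_1_iff[of _ m] by auto
  define \<mu> where "\<mu> = l1 * cnj l2"
  have "mat2_tau X = (l1 + l2)\<^sup>2 / (l1 * l2)"
    by (simp add: mat2_tau_def Xe sum prod)
  also have "\<dots> = l1 / l2 + l2 / l1 + 2"
  proof -
    have "l1 \<noteq> 0" "l2 \<noteq> 0"
      using n1 n2 by auto
    then show ?thesis
      by (simp add: field_simps power2_eq_square)
  qed
  also have "l1 / l2 = \<mu>"
    using n2 by (simp add: divide_conv_cnj \<mu>_def)
  also have "l2 / l1 = cnj \<mu>"
    using n1 by (simp add: divide_conv_cnj \<mu>_def mult.commute)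
  also have "\<mu> + cnj \<mu> + 2 = of_real (2 * Re \<mu> + 2)"
    by (simp add: complex_add_cnj)
  finally have tau: "mat2_tau X = of_real (2 * Re \<mu> + 2)" .
  have "\<bar>Re \<mu>\<bar> \<le> 1"
    using abs_Re_le_cmod[of \<mu>] n1 n2 by (simp add: \<mu>_def norm_mult)
  then show ?thesis
    using that[OF tau] by (simp add: abs_le_iff)
qed

lemma mat2_pow_unipotent:
  assumes "a + d = 2" and "a * d - b * c = 1"
  shows "mat2_pow (a, b, c, d) m =
    (of_nat m * a - (of_nat m - 1), of_nat m * b, of_nat m * c, of_nat m * d - (of_nat m - 1))"
proof (induction m)
  case (Suc m)
  define M where "M = (of_nat m :: complex)"
  have "d = 2 - a"
    using assms(1) by (simp add: algebra_simps)
  then have aa: "a * a + b * c = 2 * a - 1" and dd: "b * c + d * d = 2 * d - 1"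
    using assms(2) unfolding \<open>d = 2 - a\<close> by (simp_all add: algebra_simps)
  have "mat2_pow (a, b, c, d) (Suc m) =
      mat2_mult (a, b, c, d) (M * a - (M - 1), M * b, M * c, M * d - (M - 1))"
    using Suc by (simp add: M_def)
  also have "\<dots> = (M * (a * a + b * c) - (M - 1) * a, M * b * (a + d) - (M - 1) * b,
      M * c * (a + d) - (M - 1) * c, M * (b * c + d * d) - (M - 1) * d)"
    by (simp add: algebra_simps)
  also have "\<dots> = ((M + 1) * a - M, (M + 1) * b, (M + 1) * c, (M + 1) * d - M)"
    unfolding aa dd assms(1) by (simp add: algebra_simps)
  finally show ?case
    by (simp add: M_def algebra_simps)
qed (simp add: mat2_id_def)

section \<open>Finite semigroups of invertible matrices\<close>

definition finite_mat2_semigroup :: "mat2 set \<Rightarrow> bool" where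
  "finite_mat2_semigroup G \<longleftrightarrow>
     finite G \<and> (\<forall>X\<in>G. \<forall>Y\<in>G. mat2_mult X Y \<in> G) \<and> (\<forall>X\<in>G. mat2_det X \<noteq> 0)"

context
  fixes G :: "mat2 set"
  assumes G: "finite_mat2_semigroup G"
begin

lemma semigroup_mult_mem: "X \<in> G \<Longrightarrow> Y \<in> G \<Longrightarrow> mat2_mult X Y \<in> G"
  using G by (simp add: finite_mat2_semigroup_def)

lemma semigroup_det_nonzero: "X \<in> G \<Longrightarrow> mat2_det X \<noteq> 0"
  using G by (simp add: finite_mat2_semigroup_def)

lemma semigroup_pow_mem: "X \<in> G \<Longrightarrow> mat2_pow X (Suc k) \<in> G"
  by (induction k) (simp_all add: semigroup_mult_mem)

lemma semigroup_finite_order: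
  assumes X: "X \<in> G"
  obtains m where "0 < m" "mat2_pow X m = mat2_id"
proof -
  have "range (\<lambda>k. mat2_pow X (Suc k)) \<subseteq> G"
    using semigroup_pow_mem[OF X] by auto
  then have "\<not> inj (\<lambda>k. mat2_pow X (Suc k))"
    using G finite_subset infinite_UNIV_nat finite_imageD
    unfolding finite_mat2_semigroup_def by blast
  then obtain i j where "i < j" and eq: "mat2_pow X (Suc i) = mat2_pow X (Suc j)"
    unfolding inj_def by (metis linorder_neqE_nat)
  define P where "P = mat2_pow X (Suc i)"
  have "mat2_mult P (mat2_pow X (j - i)) = P"
    using \<open>i < j\<close> eq mat2_pow_add[of X "Suc i" "j - i"] by (simp add: P_def)
  then have "mat2_mult (mat2_mult (mat2_inv P) P) (mat2_pow X (j - i)) = mat2_mult (mat2_inv P) P"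
    by (simp add: mat2_mult_assoc)
  moreover have "mat2_det P \<noteq> 0"
    unfolding P_def using semigroup_pow_mem[OF X] semigroup_det_nonzero by blast
  ultimately have "mat2_pow X (j - i) = mat2_id"
    by (simp add: mat2_mult_inv_left)
  with \<open>i < j\<close> show ?thesis
    by (intro that[of "j - i"]) simp_all
qed

lemma semigroup_inv_mem:
  assumes X: "X \<in> G"
  shows "mat2_inv X \<in> G"
proof -
  obtain m where "0 < m" and m: "mat2_pow X m = mat2_id"
    using semigroup_finite_order[OF X] by blast
  have "Suc (Suc (2 * m - 2)) = m + m"
    using \<open>0 < m\<close> by simp
  then have "mat2_mult X (mat2_pow X (Suc (2 * m - 2))) = mat2_pow X (m + m)"
    by (simp only: mat2_pow.simps(2)[symmetric])
  then have "mat2_mult X (mat2_pow X (Suc (2 * m - 2))) = mat2_id"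
    by (simp add: mat2_pow_add m)
  then have "mat2_pow X (Suc (2 * m - 2)) = mat2_inv X"
    using mat2_inv_unique semigroup_det_nonzero[OF X] by blast
  then show ?thesis
    using semigroup_pow_mem[OF X] by metis
qed

lemma semigroup_comm_mem: "X \<in> G \<Longrightarrow> Y \<in> G \<Longrightarrow> mat2_comm X Y \<in> G"
  by (simp add: mat2_comm_def semigroup_mult_mem semigroup_inv_mem)


lemma semigroup_tau_real:
  assumes "X \<in> G"
  obtains r where "mat2_tau X = of_real r" "0 \<le> r" "r \<le> 4"
  using semigroup_finite_order[OF assms] mat2_tau_of_finite_order semigroup_det_nonzero[OF assms]
  by metis

lemma semigroup_beta_real_nonpos:
  assumes "X \<in> G" "Y \<in> G"
  obtains r where "mat2_beta X Y = of_real r" "r \<le> 0"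
proof -
  define K where "K = mat2_comm X Y"
  have "K \<in> G"
    using assms by (simp add: K_def semigroup_comm_mem)
  then obtain r where "mat2_tau K = of_real r" "0 \<le> r" "r \<le> 4"
    using semigroup_tau_real by blast
  moreover have "mat2_det K = 1"
    using assms by (simp add: K_def mat2_det_comm semigroup_det_nonzero)
  ultimately have sq: "(mat2_tr K)\<^sup>2 = of_real r" and "0 \<le> r" "r \<le> 4"
    by (simp_all add: mat2_tau_def)
  then obtain t where t: "mat2_tr K = of_real t"
    using Reals_of_square_nonneg by (metis Reals_cases)
  then have "t\<^sup>2 = r"
    using sq by (metis of_real_eq_iff of_real_power)
  then have "t \<le> 2"
    using \<open>r \<le> 4\<close> abs_le_square_iff[of t 2] by auto
  then show ?thesis
    using that[of "t - 2"] t by (simp add: mat2_beta_def K_def)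
qed

lemma semigroup_conj_iterate_mem:
  assumes "A \<in> G" "B \<in> G"
  shows "((\<lambda>X. mat2_mult (mat2_mult X A) (mat2_inv X)) ^^ k) B \<in> G"
  using assms by (induction k) (simp_all add: semigroup_mult_mem semigroup_inv_mem)

text \<open>Were \<open>\<beta>(A, B) \<noteq> 0\<close>, iterating \<open>B \<mapsto> B A B\<^sup>-\<^sup>1\<close> would produce, by Jorgensen's recursion
  \<open>\<beta> \<mapsto> \<beta> (\<beta> - c)\<close>, a strictly increasing sequence of values \<open>\<beta>(A, B\<^sub>k)\<close>, all in \<open>[-c\<^sup>2/4, 0)\<close>.\<close>

lemma semigroup_beta_eq_0:
  assumes A: "A \<in> G" and B: "B \<in> G"
    and tA: "mat2_tau A = of_real (4 + c)" and tB: "mat2_tau B = of_real (4 + c)"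
    and c: "-1 < c" "c < 0"
  shows "mat2_beta A B = 0"
proof (rule ccontr)
  assume nz: "mat2_beta A B \<noteq> 0"
  define conj where "conj X = mat2_mult (mat2_mult X A) (mat2_inv X)" for X
  define Bs where "Bs k = (conj ^^ k) B" for k
  have Bs_Suc: "Bs (Suc k) = conj (Bs k)" for k
    by (simp add: Bs_def)
  have Bs_mem: "Bs k \<in> G" for k
    unfolding Bs_def conj_def using A B by (rule semigroup_conj_iterate_mem)
  have det_Bs: "mat2_det (Bs k) \<noteq> 0" for k
    using Bs_mem semigroup_det_nonzero by blast
  have tau_Bs: "mat2_tau (Bs k) = of_real (4 + c)" for k
    using det_Bs tA tB by (cases k) (simp_all add: Bs_def, simp add: conj_def mat2_tau_conj)
  define g where "g k = Re (mat2_beta A (Bs k))" for k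
  have beta_g: "mat2_beta A (Bs k) = of_real (g k)" and g_nonpos: "g k \<le> 0" for k
  proof -
    obtain r where "mat2_beta A (Bs k) = of_real r" "r \<le> 0"
      using semigroup_beta_real_nonpos[OF A Bs_mem] .
    then show "mat2_beta A (Bs k) = of_real (g k)" "g k \<le> 0"
      by (simp_all add: g_def)
  qed
  have g_lower: "- (c\<^sup>2 / 4) \<le> g k" for k
  proof -
    obtain u where "mat2_tau (mat2_mult A (Bs k)) = of_real u" "0 \<le> u"
      using semigroup_tau_real[OF semigroup_mult_mem[OF A Bs_mem]] by metis
    then show ?thesis
      using mat2_beta_lower_bound[OF semigroup_det_nonzero[OF A] det_Bs tA tau_Bs]
        c by (simp add: g_def power2_eq_square)
  qed
  have g_Suc: "g (Suc k) = g k * (g k - c)" for k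
  proof -
    have "mat2_beta A (Bs (Suc k)) = mat2_beta A (Bs k) * (mat2_beta A (Bs k) - (mat2_tau A - 4))"
      using mat2_beta_conj[OF semigroup_det_nonzero[OF A] det_Bs[of k]]
      by (simp add: Bs_Suc conj_def)
    then have "of_real (g (Suc k)) = (of_real (g k * (g k - c)) :: complex)"
      by (simp add: beta_g tA)
    then show ?thesis
      by (simp only: of_real_eq_iff)
  qed
  have "g 0 \<noteq> 0"
    using nz beta_g[of 0] by (auto simp: Bs_def)
  then have "strict_mono g"
    using g_Suc g_lower g_nonpos c by (intro strict_mono_quadratic_recurrence)
  then have "inj g"
    by (rule strict_mono_imp_inj_on)
  moreover have "range g \<subseteq> (\<lambda>X. Re (mat2_beta A X)) ` G"
    using Bs_mem by (auto simp: g_def)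
  then have "finite (range g)"
    using G finite_subset unfolding finite_mat2_semigroup_def by blast
  ultimately show False
    using finite_imageD by fastforce
qed

lemma semigroup_unipotent_eq_id:
  assumes K: "K \<in> G" and det: "mat2_det K = 1" and tr: "mat2_tr K = 2"
  shows "K = mat2_id"
proof -
  obtain a b c d where Ke: "K = (a, b, c, d)"
    by (cases K) auto
  obtain m where "0 < m" "mat2_pow K m = mat2_id"
    using semigroup_finite_order[OF K] by blast
  then have "of_nat m * a - (of_nat m - 1) = 1" "of_nat m * b = 0" "of_nat m * c = 0"
    "of_nat m * d - (of_nat m - 1) = 1"
    using mat2_pow_unipotent[of a d b c m] det tr Ke by (simp_all add: mat2_id_def)
  then have "of_nat m * (a - 1) = 0" "of_nat m * b = 0" "of_nat m * c = 0" "of_nat m * (d - 1) = 0"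
    by (simp_all add: algebra_simps)
  then show ?thesis
    using \<open>0 < m\<close> Ke by (simp add: mat2_id_def)
qed

end

section \<open>Negative continued fractions\<close>

definition ncf_admissible :: "int list \<Rightarrow> bool" where
  "ncf_admissible cs \<longleftrightarrow> (\<forall>c\<in>set cs. 2 \<le> c)"

lemma ncf_Cons: "cs \<noteq> [] \<Longrightarrow> ncf (c # cs) = of_int c - 1 / ncf cs"
  by (cases cs) simp_all

lemma ncf_gt_1: "cs \<noteq> [] \<Longrightarrow> ncf_admissible cs \<Longrightarrow> 1 < ncf cs"
proof (induction cs)
  case (Cons c cs)
  show ?case
  proof (cases "cs = []")
    case False
    then have "1 / ncf cs < 1"
      using Cons by (simp add: ncf_admissible_def)
    moreover have "2 \<le> c"
      using Cons.prems by (simp add: ncf_admissible_def)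
    ultimately show ?thesis
      using False by (simp add: ncf_Cons)
  qed (use Cons.prems in \<open>simp add: ncf_admissible_def\<close>)
qed simp

lemma ncf_Cons_bounds:
  assumes "ncf_admissible (c # cs)" and "cs \<noteq> []"
  shows "of_int c - 1 < ncf (c # cs)" and "ncf (c # cs) < of_int c"
proof -
  have "1 < ncf cs"
    using assms ncf_gt_1 by (simp add: ncf_admissible_def)
  then show "of_int c - 1 < ncf (c # cs)" "ncf (c # cs) < of_int c"
    using assms(2) by (simp_all add: ncf_Cons)
qed

lemma ncf_Cons_ceiling: "ncf_admissible (c # cs) \<Longrightarrow> \<lceil>ncf (c # cs)\<rceil> = c"
  using ncf_Cons_bounds[of c cs] by (cases "cs = []") (simp_all add: ceiling_eq_iff)

lemma ncf_inj:
  "cs \<noteq> [] \<Longrightarrow> ds \<noteq> [] \<Longrightarrow> ncf_admissible cs \<Longrightarrow> ncf_admissible ds \<Longrightarrow>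
    ncf cs = ncf ds \<Longrightarrow> cs = ds"
proof (induction cs arbitrary: ds)
  case (Cons c cs)
  then obtain d ds' where ds: "ds = d # ds'"
    by (cases ds) auto
  have "c = d"
    using ncf_Cons_ceiling Cons.prems ds by metis
  have "cs = [] \<longleftrightarrow> ds' = []"
    using ncf_Cons_bounds[of c cs] ncf_Cons_bounds[of d ds'] Cons.prems ds \<open>c = d\<close> by fastforce
  show ?case
  proof (cases "cs = []")
    case False
    then have "ncf cs = ncf ds'"
      using Cons.prems ds \<open>c = d\<close> \<open>cs = [] \<longleftrightarrow> ds' = []\<close> by (simp add: ncf_Cons)
    then show ?thesis
      using Cons False ds \<open>c = d\<close> \<open>cs = [] \<longleftrightarrow> ds' = []\<close> by (simp add: ncf_admissible_def)
  qed (use ds \<open>c = d\<close> \<open>cs = [] \<longleftrightarrow> ds' = []\<close> in simp)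
qed simp

lemma ncf_expansion_ncf: "cs \<noteq> [] \<Longrightarrow> ncf_admissible cs \<Longrightarrow> ncf_expansion (ncf cs) = cs"
  unfolding ncf_expansion_def
  by (rule the_equality) (auto simp: ncf_admissible_def intro: ncf_inj)

definition qint :: "complex \<Rightarrow> nat \<Rightarrow> complex" where
  "qint q k = (\<Sum>i<k. q ^ i)"

lemma qint_Suc: "qint q (Suc k) = 1 + q * qint q k"
  unfolding qint_def by (subst sum.lessThan_Suc_shift) (simp add: sum_distrib_left)

lemma qint_mult_q_minus_1: "(q - 1) * qint q k = q ^ k - 1"
  unfolding qint_def by (cases "q = 1") (simp_all add: sum_gp_strict field_simps)

lemma mat2_pow_Rq: "mat2_pow (Rq q) k = (q ^ k, qint q k, 0, 1)"
  by (induction k) (simp_all add: mat2_id_def Rq_def qint_Suc, simp add: qint_def)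

lemma Mq_append: "Mq q (cs @ ds) = mat2_mult (Mq q cs) (Mq q ds)"
  by (induction cs) (simp_all add: mat2_mult_assoc)

lemma mat2_det_Mq: "q \<noteq> 0 \<Longrightarrow> mat2_det (Mq q cs) \<noteq> 0"
  by (induction cs) (simp_all add: mat2_det_mult mat2_pow_Rq Sq_def mat2_id_def)

lemma Mq_root_of_unity:
  assumes "q ^ n = 1" and "q \<noteq> 1"
  shows "Mq q [int n] = Sq q"
proof -
  have "qint q n = 0"
    using qint_mult_q_minus_1[of q n] assms by simp
  then show ?thesis
    using assms(1) by (cases "Sq q") (simp add: mat2_pow_Rq mat2_id_def Sq_def)
qed

lemma Mq_Cons_lower_left: "fst (snd (snd (Mq q (c # cs)))) = fst (Mq q cs)"
  by (cases "Mq q cs") (simp add: mat2_pow_Rq Sq_def)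

lemma Spoly_ncf:
  "cs \<noteq> [] \<Longrightarrow> ncf_admissible cs \<Longrightarrow> Spoly (ncf cs) q = fst (snd (snd (Mq q cs)))"
  by (simp add: Spoly_def ncf_expansion_ncf)

lemma Spoly_values_ncf:
  "cs \<noteq> [] \<Longrightarrow> ncf_admissible cs \<Longrightarrow> fst (snd (snd (Mq q cs))) \<in> {Spoly x q | x. x > 1}"
  by (intro CollectI exI[of _ "ncf cs"]) (simp add: Spoly_ncf ncf_gt_1)

lemma power_eq_power_imp_pow_diff_eq_1:
  fixes q :: "'a :: idom"
  assumes "q \<noteq> 0" and "q ^ k = q ^ l" and "k < l"
  shows "q ^ (l - k) = 1"
proof -
  have "q ^ k * q ^ (l - k) = q ^ l"
    using assms(3) by (simp flip: power_add)
  then have "q ^ k * q ^ (l - k) = q ^ k * 1"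
    using assms(2) by simp
  then show ?thesis
    using assms(1) by (simp del: mult_1_right)
qed

lemma power_mod_root_of_unity:
  fixes z :: "'a :: monoid_mult"
  assumes "z ^ n = 1"
  shows "z ^ k = z ^ (k mod n)"
  by (metis assms div_mult_mod_eq power_add power_mult power_one mult.commute mult_1)

lemma primitive_root_of_unityD:
  assumes "primitive_root_of_unity n z"
  shows "z ^ n = 1" and "0 < m \<Longrightarrow> m < n \<Longrightarrow> z ^ m \<noteq> 1" and "z \<noteq> 0"
  using assms by (auto simp: primitive_root_of_unity_def power_0_left)

lemma primitive_root_of_unity_Least:
  assumes "0 < m" "z ^ m = 1"
  shows "primitive_root_of_unity (LEAST n. 0 < n \<and> z ^ n = 1) z"
  unfolding primitive_root_of_unity_def
  using LeastI[of "\<lambda>n. 0 < n \<and> z ^ n = 1" m] not_less_Least[of _ "\<lambda>n. 0 < n \<and> z ^ n = 1"] assms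
  by blast

lemma primitive_root_of_unity_powers:
  assumes "primitive_root_of_unity n z"
  shows "(\<lambda>j. z ^ j) ` {..<n} = {w. w ^ n = 1}"
proof -
  have n: "0 < n" "z ^ n = 1"
    using assms by (simp_all add: primitive_root_of_unity_def)
  note z = primitive_root_of_unityD(2)[OF assms]
  have "z \<noteq> 0"
    using primitive_root_of_unityD(3)[OF assms] .
  have "inj_on (\<lambda>j. z ^ j) {..<n}"
  proof (rule linorder_inj_onI')
    fix i k
    assume "i \<in> {..<n}" "k \<in> {..<n}" "i < k"
    then show "z ^ i \<noteq> z ^ k"
      using power_eq_power_imp_pow_diff_eq_1[OF \<open>z \<noteq> 0\<close>, of i k] z[of "k - i"] by auto
  qed
  then have "card ((\<lambda>j. z ^ j) ` {..<n}) = card {w::complex. w ^ n = 1}"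
    using card_roots_unity_eq[OF n(1)] by (simp add: card_image)
  moreover have "(z ^ j) ^ n = 1" for j
    using n(2) by (metis power_mult mult.commute power_one)
  then have "(\<lambda>j. z ^ j) ` {..<n} \<subseteq> {w. w ^ n = 1}"
    by auto
  moreover have "finite {w::complex. w ^ n = 1}"
    using n(1) by (intro finite_roots_unity) simp
  ultimately show ?thesis
    using card_subset_eq by blast
qed

lemma primitive_root_of_unity_power_cis:
  assumes "primitive_root_of_unity n z"
  obtains j where "z ^ j = cis (2 * pi / n)"
proof -
  have "cis (2 * pi / n) ^ n = 1"
    using assms by (simp add: DeMoivre primitive_root_of_unity_def)
  then have "cis (2 * pi / n) \<in> (\<lambda>j. z ^ j) ` {..<n}"
    by (simp add: primitive_root_of_unity_powers[OF assms])
  then show ?thesis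
    using that by auto
qed

lemma cis_plus_1_squared_div: "(cis \<theta> + 1)\<^sup>2 / cis \<theta> = of_real (2 + 2 * cos \<theta>)"
proof -
  have "(cis \<theta> + 1)\<^sup>2 / cis \<theta> = cis \<theta> + inverse (cis \<theta>) + 2"
    by (simp add: field_simps power2_eq_square)
  also have "cis \<theta> + inverse (cis \<theta>) = of_real (2 * cos \<theta>)"
    by (simp add: complex_eq_iff)
  finally show ?thesis
    by simp
qed

lemma cos_2pi_div_bounds:
  fixes n :: nat
  assumes "7 \<le> n"
  shows "1 / 2 < cos (2 * pi / n)" and "cos (2 * pi / n) < 1"
proof -
  have "0 < 2 * pi / n" "2 * pi / n < pi / 3"
    using assms pi_gt_zero by (simp_all add: field_simps)
  then show "1 / 2 < cos (2 * pi / n)" "cos (2 * pi / n) < 1"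
    using cos_monotone_0_pi[of "2 * pi / n" "pi / 3"] cos_monotone_0_pi[of 0 "2 * pi / n"] cos_60
    by simp_all
qed

section \<open>Non-roots of unity\<close>

lemma Mq_Cons_2_upper_left:
  assumes "q \<noteq> 0"
  shows "fst (Mq q (2 # cs)) = (1 + q) * fst (Mq q cs) - q * fst (snd (snd (Mq q cs)))"
proof -
  have "mat2_pow (Rq q) 2 = (q\<^sup>2, 1 + q, 0, 1)"
    by (simp add: Rq_def numeral_2_eq_2 mat2_id_def power2_eq_square)
  moreover have "mat2_mult (q\<^sup>2, 1 + q, 0, 1) (Sq q) = (1 + q, - q, 1, 0)"
    using assms by (simp add: Sq_def power2_eq_square)
  ultimately show ?thesis
    by (cases "Mq q cs") (simp add: algebra_simps)
qed

lemma Mq_replicate_2: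
  assumes "q \<noteq> 0"
  shows "fst (Mq q (replicate k 2)) = qint q (Suc k) \<and>
    fst (snd (snd (Mq q (replicate k 2)))) = qint q k"
proof (induction k)
  case (Suc k)
  then have "fst (Mq q (replicate (Suc k) 2)) = (1 + q) * qint q (Suc k) - q * qint q k"
    by (simp only: replicate_Suc Mq_Cons_2_upper_left[OF assms])
  also have "\<dots> = qint q (Suc (Suc k))"
    by (simp add: qint_Suc algebra_simps)
  finally show ?case
    using Suc by (simp only: replicate_Suc Mq_Cons_lower_left)
qed (simp add: mat2_id_def qint_def)

lemma inj_qint:
  assumes "q \<noteq> 0" and "q = 1 \<or> (\<forall>m>0. q ^ m \<noteq> 1)"
  shows "inj (qint q)"
proof (cases "q = 1")
  case True
  then show ?thesis
    by (simp add: inj_def qint_def)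
next
  case False
  show ?thesis
  proof (rule injI)
    fix k l
    assume "qint q k = qint q l"
    then have "q ^ k = q ^ l"
      using qint_mult_q_minus_1[of q k] qint_mult_q_minus_1[of q l] by simp
    then show "k = l"
      using power_eq_power_imp_pow_diff_eq_1[OF assms(1)] assms(2) False
      by (metis linorder_neqE_nat zero_less_diff)
  qed
qed

lemma qint_in_Spoly_values:
  assumes "q \<noteq> 0" and "1 \<le> k"
  shows "qint q k \<in> {Spoly x q | x. x > 1}"
  using Spoly_values_ncf[of "replicate k 2" q] Mq_replicate_2[OF assms(1), of k] assms(2)
  by (simp add: ncf_admissible_def)

lemma infinite_Spoly_values_non_root_of_unity:
  assumes "q \<noteq> 0" and "q = 1 \<or> (\<forall>m>0. q ^ m \<noteq> 1)"
  shows "infinite {Spoly x q | x. x > 1}"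
proof
  assume "finite {Spoly x q | x. x > 1}"
  moreover have "qint q ` {1..} \<subseteq> {Spoly x q | x. x > 1}"
    using qint_in_Spoly_values[OF assms(1)] by auto
  ultimately have "finite (qint q ` {1..})"
    by (rule finite_subset[rotated])
  then show False
    using inj_qint[OF assms] finite_imageD inj_on_subset infinite_Ici by blast
qed

section \<open>Roots of unity of order at least six\<close>

definition Mq_semigroup :: "complex \<Rightarrow> mat2 set" where
  "Mq_semigroup q = Mq q ` {cs. cs \<noteq> [] \<and> ncf_admissible cs}"

lemma Mq_in_Mq_semigroup: "cs \<noteq> [] \<Longrightarrow> ncf_admissible cs \<Longrightarrow> Mq q cs \<in> Mq_semigroup q"
  by (simp add: Mq_semigroup_def)

text \<open>Since \<open>M\<^sub>q(n) = S\<^sub>q\<close>, appending \<open>n\<close> moves the right column of \<open>M\<^sub>q(c)\<close> to the left, and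
  prepending any entry moves the upper-left entry to the lower-left, where the values of
  \<open>\<S>\<close> live.\<close>

lemma Mq_semigroup_entries:
  assumes "2 \<le> n" "q ^ n = 1" "q \<noteq> 1" and "X \<in> Mq_semigroup q"
  defines "V \<equiv> {Spoly x q | x. x > 1}"
  shows "X \<in> V \<times> V \<times> V \<times> V"
proof -
  obtain cs where cs: "cs \<noteq> []" "ncf_admissible cs" and X: "X = Mq q cs"
    using assms(4) by (auto simp: Mq_semigroup_def)
  obtain a b c d where abcd: "Mq q cs = (a, b, c, d)"
    by (cases "Mq q cs") auto
  have lower: "fst (snd (snd (Mq q ds))) \<in> V" if "ds \<noteq> []" "ncf_admissible ds" for ds
    unfolding V_def using that by (rule Spoly_values_ncf)
  have upper: "fst (Mq q ds) \<in> V" if "ncf_admissible ds" for ds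
    using lower[of "2 # ds"] that unfolding Mq_Cons_lower_left by (simp add: ncf_admissible_def)
  have "Mq q (cs @ [int n]) = (b, - a / q, d, - c / q)"
    by (simp only: Mq_append Mq_root_of_unity[OF assms(2,3)] abcd) (simp add: Sq_def divide_inverse)
  moreover have "ncf_admissible (cs @ [int n])"
    using cs(2) assms(1) by (simp add: ncf_admissible_def)
  ultimately have "b \<in> V" "d \<in> V"
    using upper[of "cs @ [int n]"] lower[of "cs @ [int n]"] by simp_all
  moreover have "a \<in> V" "c \<in> V"
    using upper[of cs] lower[of cs] cs abcd by simp_all
  ultimately show ?thesis
    by (simp add: X abcd)
qed

lemma Mq_semigroup_finite:
  assumes "2 \<le> n" "q ^ n = 1" "q \<noteq> 1" and "finite {Spoly x q | x. x > 1}"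
  shows "finite_mat2_semigroup (Mq_semigroup q)"
  unfolding finite_mat2_semigroup_def
proof (intro conjI ballI)
  let ?V = "{Spoly x q | x. x > 1}"
  have "Mq_semigroup q \<subseteq> ?V \<times> ?V \<times> ?V \<times> ?V"
    using Mq_semigroup_entries[OF assms(1-3)] by blast
  then show "finite (Mq_semigroup q)"
    by (rule finite_subset) (intro finite_cartesian_product assms(4))
  show "mat2_mult X Y \<in> Mq_semigroup q" if XY: "X \<in> Mq_semigroup q" "Y \<in> Mq_semigroup q" for X Y
  proof -
    obtain cs ds where "cs \<noteq> []" "ncf_admissible cs" "X = Mq q cs" "ncf_admissible ds" "Y = Mq q ds"
      using XY unfolding Mq_semigroup_def by blast
    have "Mq q (cs @ ds) \<in> Mq_semigroup q"
      using \<open>cs \<noteq> []\<close> \<open>ncf_admissible cs\<close> \<open>ncf_admissible ds\<close>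
      by (intro Mq_in_Mq_semigroup) (auto simp: ncf_admissible_def)
    then show ?thesis
      by (simp only: Mq_append \<open>X = Mq q cs\<close> \<open>Y = Mq q ds\<close>)
  qed
  have "q \<noteq> 0"
    using assms(1,2) by (metis not_numeral_le_zero power_0_left zero_neq_one)
  then show "mat2_det X \<noteq> 0" if "X \<in> Mq_semigroup q" for X
    using that by (auto simp: Mq_semigroup_def mat2_det_Mq)
qed

definition scaled_Rq_pow :: "complex \<Rightarrow> nat \<Rightarrow> mat2" where
  "scaled_Rq_pow q j = mat2_scale (- inverse q) (q ^ j, qint q j, 0, 1)"

definition scaled_Rq_pow_conj :: "complex \<Rightarrow> nat \<Rightarrow> mat2" where
  "scaled_Rq_pow_conj q j = mat2_scale (- inverse q) (1, 0, - qint q j * q, q ^ j)"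

lemma Mq_power_pair:
  assumes "q ^ n = 1" and "q \<noteq> 1"
  shows "Mq q [int (j + n), int n] = scaled_Rq_pow q j"
proof -
  have "(q - 1) * qint q (j + n) = (q - 1) * qint q j"
    using assms(1) by (simp add: qint_mult_q_minus_1 power_add)
  then have "qint q (j + n) = qint q j"
    using assms(2) by simp
  have "Mq q [int (j + n), int n] = mat2_mult (mat2_mult (mat2_pow (Rq q) (j + n)) (Sq q)) (Sq q)"
    by (simp only: Mq.simps(2)[of q "int (j + n)"] Mq_root_of_unity[OF assms] nat_int)
  also have "\<dots> = scaled_Rq_pow q j"
    using assms(1) \<open>qint q (j + n) = qint q j\<close>
    by (simp add: scaled_Rq_pow_def mat2_pow_Rq power_add Sq_def)
  finally show ?thesis .
qed

lemma Sq_conj_scaled_Rq_pow: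
  "q \<noteq> 0 \<Longrightarrow>
    mat2_mult (mat2_mult (Sq q) (scaled_Rq_pow q j)) (mat2_inv (Sq q)) = scaled_Rq_pow_conj q j"
  by (simp add: scaled_Rq_pow_def scaled_Rq_pow_conj_def Sq_def mat2_inv_def field_simps)

lemma Mq_semigroup_scaled_Rq_pow:
  assumes G: "finite_mat2_semigroup (Mq_semigroup q)" and "2 \<le> n" "q ^ n = 1" "q \<noteq> 1"
  shows "scaled_Rq_pow q j \<in> Mq_semigroup q" and "scaled_Rq_pow_conj q j \<in> Mq_semigroup q"
proof -
  show A: "scaled_Rq_pow q j \<in> Mq_semigroup q"
    using Mq_in_Mq_semigroup[of "[int (j + n), int n]" q] Mq_power_pair[OF assms(3,4)] assms(2)
    by (simp add: ncf_admissible_def)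
  have S: "Sq q \<in> Mq_semigroup q"
    using Mq_in_Mq_semigroup[of "[int n]" q] Mq_root_of_unity[OF assms(3,4)] assms(2)
    by (simp add: ncf_admissible_def)
  have "q \<noteq> 0"
    using assms(2,3) by (metis not_numeral_le_zero power_0_left zero_neq_one)
  then show "scaled_Rq_pow_conj q j \<in> Mq_semigroup q"
    using semigroup_mult_mem[OF G semigroup_mult_mem[OF G S A] semigroup_inv_mem[OF G S]]
    by (simp only: Sq_conj_scaled_Rq_pow[OF \<open>q \<noteq> 0\<close>])
qed

lemma mat2_tau_scaled_Rq_pow:
  assumes "q \<noteq> 0"
  shows "mat2_tau (scaled_Rq_pow q j) = (q ^ j + 1)\<^sup>2 / q ^ j"
    and "mat2_tau (scaled_Rq_pow_conj q j) = (q ^ j + 1)\<^sup>2 / q ^ j"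
proof -
  have "- inverse q \<noteq> 0"
    using assms by simp
  then show "mat2_tau (scaled_Rq_pow q j) = (q ^ j + 1)\<^sup>2 / q ^ j"
    "mat2_tau (scaled_Rq_pow_conj q j) = (q ^ j + 1)\<^sup>2 / q ^ j"
    unfolding scaled_Rq_pow_def scaled_Rq_pow_conj_def mat2_tau_scale[OF \<open>- inverse q \<noteq> 0\<close>]
    by (simp_all add: mat2_tau_def add.commute)
qed

lemma mat2_beta_triangular_pair:
  assumes "w \<noteq> 0"
  shows "mat2_beta (w, b, 0, 1) (1, 0, - b * z, w) = b\<^sup>2 * z * (b\<^sup>2 * z + (w - 1)\<^sup>2) / w\<^sup>2"
proof -
  have "mat2_det (w, b, 0, 1) \<noteq> 0" "mat2_det (1, 0, - b * z, w) \<noteq> 0"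
    using assms by simp_all
  then show ?thesis
    using assms by (simp add: mat2_beta_def mat2_tr_comm field_simps power2_eq_square)
qed

lemma mat2_beta_scaled_Rq_pow:
  assumes "q \<noteq> 0"
  shows "mat2_beta (scaled_Rq_pow q j) (scaled_Rq_pow_conj q j) =
    qint q j ^ 4 * q * (q\<^sup>2 - q + 1) / (q ^ j)\<^sup>2"
proof -
  have "mat2_beta (scaled_Rq_pow q j) (scaled_Rq_pow_conj q j) =
      mat2_beta (q ^ j, qint q j, 0, 1) (1, 0, - qint q j * q, q ^ j)"
    unfolding scaled_Rq_pow_def scaled_Rq_pow_conj_def using assms
    by (intro mat2_beta_scale) simp_all
  also have "\<dots> = (qint q j)\<^sup>2 * q * ((qint q j)\<^sup>2 * q + (q ^ j - 1)\<^sup>2) / (q ^ j)\<^sup>2"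
    using assms by (intro mat2_beta_triangular_pair) simp
  also have "(q ^ j - 1)\<^sup>2 = ((q - 1) * qint q j)\<^sup>2"
    by (simp add: qint_mult_q_minus_1)
  finally show ?thesis
    by (simp add: algebra_simps power2_eq_square power4_eq_xxxx)
qed

lemma infinite_Spoly_values_order_6:
  assumes prim: "primitive_root_of_unity 6 z"
  shows "infinite {Spoly x z | x. x > 1}"
proof
  assume fin: "finite {Spoly x z | x. x > 1}"
  note z6 = primitive_root_of_unityD(1)[OF prim]
  have "z \<noteq> 0"
    using primitive_root_of_unityD(3)[OF prim] .
  have "z ^ 3 \<noteq> 1" "z ^ 2 \<noteq> 1" "z \<noteq> 1"
    using primitive_root_of_unityD(2)[OF prim, of 3] primitive_root_of_unityD(2)[OF prim, of 2]
      primitive_root_of_unityD(2)[OF prim, of 1] by simp_all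
  have "z + 1 \<noteq> 0"
    using \<open>z ^ 2 \<noteq> 1\<close> by (auto simp: add_eq_0_iff2)
  have "(z ^ 3 - 1) * (z + 1) * (z\<^sup>2 - z + 1) = z ^ 6 - 1"
    by algebra
  then have "z\<^sup>2 - z + 1 = 0"
    using z6 \<open>z ^ 3 \<noteq> 1\<close> \<open>z + 1 \<noteq> 0\<close> by simp
  define G where "G = Mq_semigroup z"
  have G: "finite_mat2_semigroup G"
    unfolding G_def using Mq_semigroup_finite[of 6 z] z6 \<open>z \<noteq> 1\<close> fin by simp
  define A where "A = scaled_Rq_pow z 1"
  define B where "B = scaled_Rq_pow_conj z 1"
  have A: "A \<in> G" and B: "B \<in> G"
    using Mq_semigroup_scaled_Rq_pow[OF G[unfolded G_def] _ z6 \<open>z \<noteq> 1\<close>]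
    by (simp_all add: A_def B_def G_def)
  have dA: "mat2_det A \<noteq> 0" and dB: "mat2_det B \<noteq> 0"
    using semigroup_det_nonzero[OF G] A B by blast+
  have "mat2_beta A B = 0"
    unfolding A_def B_def mat2_beta_scaled_Rq_pow[OF \<open>z \<noteq> 0\<close>] \<open>z\<^sup>2 - z + 1 = 0\<close> by simp
  then have "mat2_comm A B = mat2_id"
    using semigroup_unipotent_eq_id[OF G semigroup_comm_mem[OF G A B]] mat2_det_comm[OF dA dB]
    by (simp add: mat2_beta_def)
  then have "mat2_mult A B = mat2_mult B A"
    using mat2_comm_eq_id_imp_commute[OF dA dB] by blast
  then show False
    using \<open>z \<noteq> 0\<close> \<open>z \<noteq> 1\<close>
    by (simp add: A_def B_def scaled_Rq_pow_def scaled_Rq_pow_conj_def qint_def)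
qed

lemma infinite_Spoly_values_order_ge_7:
  assumes prim: "primitive_root_of_unity n z" and "7 \<le> n"
  shows "infinite {Spoly x z | x. x > 1}"
proof
  assume fin: "finite {Spoly x z | x. x > 1}"
  note zn = primitive_root_of_unityD(1)[OF prim]
  have "z \<noteq> 0"
    using primitive_root_of_unityD(3)[OF prim] .
  have "z \<noteq> 1" "z ^ 6 \<noteq> 1"
    using primitive_root_of_unityD(2)[OF prim, of 1] primitive_root_of_unityD(2)[OF prim, of 6]
      assms(2)
    by simp_all
  define G where "G = Mq_semigroup z"
  have G: "finite_mat2_semigroup G"
    unfolding G_def using assms(2) by (intro Mq_semigroup_finite[OF _ zn \<open>z \<noteq> 1\<close> fin]) simp
  obtain j where w: "z ^ j = cis (2 * pi / n)"
    using primitive_root_of_unity_power_cis[OF prim] .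
  define c where "c = 2 * cos (2 * pi / n) - 2"
  have c: "-1 < c" "c < 0"
    using cos_2pi_div_bounds[OF assms(2)] by (simp_all add: c_def)
  have "z ^ j \<noteq> 0"
    using \<open>z \<noteq> 0\<close> by simp
  have "z ^ j \<noteq> 1"
    using w cos_2pi_div_bounds(2)[OF assms(2)] by (auto simp: complex_eq_iff)
  define A where "A = scaled_Rq_pow z j"
  define B where "B = scaled_Rq_pow_conj z j"
  have A: "A \<in> G" and B: "B \<in> G"
    using Mq_semigroup_scaled_Rq_pow[OF G[unfolded G_def] _ zn \<open>z \<noteq> 1\<close>] assms(2)
    by (simp_all add: A_def B_def G_def)
  have "(z ^ j + 1)\<^sup>2 / z ^ j = of_real (4 + c)"
    unfolding w cis_plus_1_squared_div by (simp add: c_def)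
  then have "mat2_tau A = of_real (4 + c)" "mat2_tau B = of_real (4 + c)"
    unfolding A_def B_def mat2_tau_scaled_Rq_pow[OF \<open>z \<noteq> 0\<close>] by simp_all
  then have "mat2_beta A B = 0"
    using semigroup_beta_eq_0[OF G A B] c by blast
  then have "qint z j ^ 4 * z * (z\<^sup>2 - z + 1) / (z ^ j)\<^sup>2 = 0"
    unfolding A_def B_def mat2_beta_scaled_Rq_pow[OF \<open>z \<noteq> 0\<close>] .
  moreover have "qint z j \<noteq> 0"
    using qint_mult_q_minus_1[of z j] \<open>z ^ j \<noteq> 1\<close> by auto
  moreover have "z\<^sup>2 - z + 1 \<noteq> 0"
  proof
    assume "z\<^sup>2 - z + 1 = 0"
    moreover have "(z + 1) * (z ^ 3 - 1) * (z\<^sup>2 - z + 1) = z ^ 6 - 1"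
      by algebra
    ultimately show False
      using \<open>z ^ 6 \<noteq> 1\<close> by simp
  qed
  ultimately show False
    using \<open>z \<noteq> 0\<close> \<open>z ^ j \<noteq> 0\<close> by simp
qed

section \<open>Roots of unity of order two to five\<close>

definition root_multiples :: "complex \<Rightarrow> (complex \<times> complex) set \<Rightarrow> (complex \<times> complex) set" where
  "root_multiples z W = {(s * z ^ k * a, s * z ^ k * b) | s k a b. s \<in> {1, - 1} \<and> (a, b) \<in> W}"

lemma root_multiplesI:
  assumes "(a, b) \<in> W" "s \<in> {1, - 1}" "x = s * z ^ k * a" "y = s * z ^ k * b"
  shows "(x, y) \<in> root_multiples z W"
  using assms unfolding root_multiples_def by blast

lemma finite_root_multiples:
  assumes "z ^ n = 1" and "0 < n" and "finite W"
  shows "finite (root_multiples z W)"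
proof -
  let ?f = "\<lambda>(s, u, a, b). (s * u * a, s * u * b)"
  have "(s * z ^ k * a, s * z ^ k * b) \<in> ?f ` ({1, - 1} \<times> (\<lambda>k. z ^ k) ` {..<n} \<times> W)"
    if "s \<in> {1, - 1}" "(a, b) \<in> W" for s k a b
  proof -
    have "z ^ k \<in> (\<lambda>k. z ^ k) ` {..<n}"
      using power_mod_root_of_unity[OF assms(1), of k] assms(2) by auto
    then show ?thesis
      using that by (force intro: image_eqI[of _ _ "(s, z ^ k, a, b)"])
  qed
  then have "root_multiples z W \<subseteq> ?f ` ({1, - 1} \<times> (\<lambda>k. z ^ k) ` {..<n} \<times> W)"
    unfolding root_multiples_def by blast
  then show ?thesis
    by (rule finite_subset) (intro finite_imageI finite_cartesian_product assms(3); simp)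
qed

lemma root_multiples_invariant:
  assumes closed: "\<forall>w\<in>W. mat2_apply X w \<in> root_multiples z W" and v: "v \<in> root_multiples z W"
  shows "mat2_apply X v \<in> root_multiples z W"
proof -
  obtain s k a b where s: "s \<in> {1, - 1}" and ab: "(a, b) \<in> W"
    and v: "v = (s * z ^ k * a, s * z ^ k * b)"
    using v unfolding root_multiples_def by blast
  obtain s' k' a' b' where s': "s' \<in> {1, - 1}" and ab': "(a', b') \<in> W"
    and X: "mat2_apply X (a, b) = (s' * z ^ k' * a', s' * z ^ k' * b')"
    using closed ab unfolding root_multiples_def by blast
  have Xv: "mat2_apply X v = ((s * s') * z ^ (k + k') * a', (s * s') * z ^ (k + k') * b')"
    using mat2_apply_scaled[of X "s * z ^ k" a b] by (simp add: v X power_add mult_ac)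
  have "s * s' \<in> {1, - 1}"
    using s s' by auto
  then show ?thesis
    unfolding Xv using ab' by (intro root_multiplesI) auto
qed

lemma mat2_apply_Rq: "mat2_apply (Rq q) (a, b) = (q * a + b, b)"
  by (simp add: Rq_def)

lemma mat2_apply_Sq: "q * r = 1 \<Longrightarrow> mat2_apply (Sq q) (a, b) = (- r * b, a)"
  by (simp add: Sq_def inverse_unique)

lemma finite_Spoly_values_of_invariant:
  assumes "z ^ n = 1" "0 < n" "finite W" "(1, 0) \<in> W"
    and R: "\<forall>w\<in>W. mat2_apply (Rq z) w \<in> root_multiples z W"
    and S: "\<forall>w\<in>W. mat2_apply (Sq z) w \<in> root_multiples z W"
  shows "finite {Spoly x z | x. x > 1}"
proof -
  have Rk: "mat2_apply (mat2_pow (Rq z) k) v \<in> root_multiples z W"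
    if "v \<in> root_multiples z W" for k v
    using that by (induction k) (simp_all add: mat2_apply_mult root_multiples_invariant[OF R])
  have col: "mat2_apply (Mq z cs) (1, 0) \<in> root_multiples z W" for cs
  proof (induction cs)
    case Nil
    then show ?case
      using assms(4) by (simp add: root_multiplesI[where s = 1 and k = 0])
  next
    case (Cons c cs)
    then show ?case
      by (simp add: mat2_apply_mult Rk root_multiples_invariant[OF S])
  qed
  have "{Spoly x z | x. x > 1} \<subseteq> snd ` root_multiples z W"
  proof
    fix y
    assume "y \<in> {Spoly x z | x. x > 1}"
    then obtain x where "y = Spoly x z"
      by blast
    then have "y = snd (mat2_apply (Mq z (ncf_expansion x)) (1, 0))"
      by (cases "Mq z (ncf_expansion x)") (simp add: Spoly_def)
    then show "y \<in> snd ` root_multiples z W"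
      using col by blast
  qed
  then show ?thesis
    using finite_root_multiples[OF assms(1-3)] finite_subset by blast
qed

text \<open>For \<open>n = 2, 3, 4, 5\<close> the images of \<open>R\<^sub>z\<close> and \<open>S\<^sub>z\<close> in \<open>PGL\<^sub>2(\<complex>)\<close> generate a group
  isomorphic to \<open>S\<^sub>3, A\<^sub>4, S\<^sub>4\<close> or \<open>A\<^sub>5\<close>. The set \<open>W\<close> lists representatives of the orbit of
  \<open>(1 : 0)\<close> in the projective line (3, 4, 6 or 12 points), scaled so that \<open>R\<^sub>z\<close> and \<open>S\<^sub>z\<close>
  permute them up to factors \<open>\<plusminus>z\<^sup>k\<close>.\<close>

lemma finite_Spoly_values_order_2:
  assumes "primitive_root_of_unity 2 z"
  shows "finite {Spoly x z | x. x > 1}"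
proof -
  have zn: "z ^ 2 = 1" and "z \<noteq> 1"
    using primitive_root_of_unityD(1)[OF assms] primitive_root_of_unityD(2)[OF assms, of 1]
    by simp_all
  have "(z - 1) * (z + 1) = z\<^sup>2 - 1"
    by algebra
  then have rel: "z + 1 = 0"
    using zn \<open>z \<noteq> 1\<close> by simp
  have S: "mat2_apply (Sq z) (a, b) = (- z * b, a)" for a b
    by (rule mat2_apply_Sq) (use zn in algebra)
  define W :: "(complex \<times> complex) set" where "W = {(1, 0), (0, 1), (1, 1)}"
  show ?thesis
  proof (rule finite_Spoly_values_of_invariant[of z 2 W])
    show "\<forall>w\<in>W. mat2_apply (Rq z) w \<in> root_multiples z W"
      unfolding W_def ball_simps mat2_apply_Rq
      apply (intro conjI TrueI)
      subgoal by (rule root_multiplesI[where s = 1 and k = 1 and a = 1 and b = 0])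
          ((use rel in algebra | simp | algebra)+)
      subgoal by (rule root_multiplesI[where s = 1 and k = 0 and a = 1 and b = 1])
          ((use rel in algebra | simp | algebra)+)
      subgoal by (rule root_multiplesI[where s = 1 and k = 0 and a = 0 and b = 1])
          ((use rel in algebra | simp | algebra)+)
      done
    show "\<forall>w\<in>W. mat2_apply (Sq z) w \<in> root_multiples z W"
      unfolding W_def ball_simps S
      apply (intro conjI TrueI)
      subgoal by (rule root_multiplesI[where s = 1 and k = 0 and a = 0 and b = 1])
          ((use rel in algebra | simp | algebra)+)
      subgoal by (rule root_multiplesI[where s = 1 and k = 0 and a = 1 and b = 0])
          ((use rel in algebra | simp | algebra)+)
      subgoal by (rule root_multiplesI[where s = 1 and k = 0 and a = 1 and b = 1])
          ((use rel in algebra | simp | algebra)+)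
      done
  qed (simp_all add: zn W_def)
qed

lemma finite_Spoly_values_order_3:
  assumes "primitive_root_of_unity 3 z"
  shows "finite {Spoly x z | x. x > 1}"
proof -
  have zn: "z ^ 3 = 1" and "z \<noteq> 1"
    using primitive_root_of_unityD(1)[OF assms] primitive_root_of_unityD(2)[OF assms, of 1]
    by simp_all
  have "(z - 1) * (1 + z + z\<^sup>2) = z ^ 3 - 1"
    by algebra
  then have rel: "1 + z + z\<^sup>2 = 0"
    using zn \<open>z \<noteq> 1\<close> by simp
  have S: "mat2_apply (Sq z) (a, b) = (- (z ^ 2) * b, a)" for a b
    by (rule mat2_apply_Sq) (use zn in algebra)
  define W :: "(complex \<times> complex) set" where "W = {(1, 0), (0, 1), (1, 1), (1 + z, 1)}"
  show ?thesis
  proof (rule finite_Spoly_values_of_invariant[of z 3 W])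
    show "\<forall>w\<in>W. mat2_apply (Rq z) w \<in> root_multiples z W"
      unfolding W_def ball_simps mat2_apply_Rq
      apply (intro conjI TrueI)
      subgoal by (rule root_multiplesI[where s = 1 and k = 1 and a = 1 and b = 0])
          ((use rel in algebra | simp | algebra)+)
      subgoal by (rule root_multiplesI[where s = 1 and k = 0 and a = 1 and b = 1])
          ((use rel in algebra | simp | algebra)+)
      subgoal by (rule root_multiplesI[where s = 1 and k = 0 and a = "1 + z" and b = 1])
          ((use rel in algebra | simp | algebra)+)
      subgoal by (rule root_multiplesI[where s = 1 and k = 0 and a = 0 and b = 1])
          ((use rel in algebra | simp | algebra)+)
      done
    show "\<forall>w\<in>W. mat2_apply (Sq z) w \<in> root_multiples z W"
      unfolding W_def ball_simps S
      apply (intro conjI TrueI)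
      subgoal by (rule root_multiplesI[where s = 1 and k = 0 and a = 0 and b = 1])
          ((use rel in algebra | simp | algebra)+)
      subgoal by (rule root_multiplesI[where s = "- 1" and k = 2 and a = 1 and b = 0])
          ((use rel in algebra | simp | algebra)+)
      subgoal by (rule root_multiplesI[where s = 1 and k = 0 and a = "1 + z" and b = 1])
          ((use rel in algebra | simp | algebra)+)
      subgoal by (rule root_multiplesI[where s = "- 1" and k = 2 and a = 1 and b = 1])
          ((use rel in algebra | simp | algebra)+)
      done
  qed (simp_all add: zn W_def)
qed

lemma finite_Spoly_values_order_4:
  assumes "primitive_root_of_unity 4 z"
  shows "finite {Spoly x z | x. x > 1}"
proof -
  have zn: "z ^ 4 = 1" and "z ^ 2 \<noteq> 1"
    using primitive_root_of_unityD(1)[OF assms] primitive_root_of_unityD(2)[OF assms, of 2]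
    by simp_all
  have "(z\<^sup>2 - 1) * (z\<^sup>2 + 1) = z ^ 4 - 1"
    by algebra
  then have rel: "z\<^sup>2 + 1 = 0"
    using zn \<open>z ^ 2 \<noteq> 1\<close> by simp
  have S: "mat2_apply (Sq z) (a, b) = (- (z ^ 3) * b, a)" for a b
    by (rule mat2_apply_Sq) (use zn in algebra)
  define W :: "(complex \<times> complex) set" where
    "W = {(1, 0), (0, 1), (1, 1), (1 + z, 1), (z, 1), (z, 1 + z)}"
  show ?thesis
  proof (rule finite_Spoly_values_of_invariant[of z 4 W])
    show "\<forall>w\<in>W. mat2_apply (Rq z) w \<in> root_multiples z W"
      unfolding W_def ball_simps mat2_apply_Rq
      apply (intro conjI TrueI)
      subgoal by (rule root_multiplesI[where s = 1 and k = 1 and a = 1 and b = 0])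
          ((use rel in algebra | simp | algebra)+)
      subgoal by (rule root_multiplesI[where s = 1 and k = 0 and a = 1 and b = 1])
          ((use rel in algebra | simp | algebra)+)
      subgoal by (rule root_multiplesI[where s = 1 and k = 0 and a = "1 + z" and b = 1])
          ((use rel in algebra | simp | algebra)+)
      subgoal by (rule root_multiplesI[where s = 1 and k = 0 and a = "z" and b = 1])
          ((use rel in algebra | simp | algebra)+)
      subgoal by (rule root_multiplesI[where s = 1 and k = 0 and a = 0 and b = 1])
          ((use rel in algebra | simp | algebra)+)
      subgoal by (rule root_multiplesI[where s = 1 and k = 0 and a = "z" and b = "1 + z"])
          ((use rel in algebra | simp | algebra)+)
      done
    show "\<forall>w\<in>W. mat2_apply (Sq z) w \<in> root_multiples z W"
      unfolding W_def ball_simps S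
      apply (intro conjI TrueI)
      subgoal by (rule root_multiplesI[where s = 1 and k = 0 and a = 0 and b = 1])
          ((use rel in algebra | simp | algebra)+)
      subgoal by (rule root_multiplesI[where s = 1 and k = 1 and a = 1 and b = 0])
          ((use rel in algebra | simp | algebra)+)
      subgoal by (rule root_multiplesI[where s = 1 and k = 0 and a = "z" and b = 1])
          ((use rel in algebra | simp | algebra)+)
      subgoal by (rule root_multiplesI[where s = 1 and k = 0 and a = "z" and b = "1 + z"])
          ((use rel in algebra | simp | algebra)+)
      subgoal by (rule root_multiplesI[where s = 1 and k = 1 and a = 1 and b = 1])
          ((use rel in algebra | simp | algebra)+)
      subgoal by (rule root_multiplesI[where s = 1 and k = 1 and a = "1 + z" and b = 1])
          ((use rel in algebra | simp | algebra)+)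
      done
  qed (simp_all add: zn W_def)
qed

lemma finite_Spoly_values_order_5:
  assumes "primitive_root_of_unity 5 z"
  shows "finite {Spoly x z | x. x > 1}"
proof -
  have zn: "z ^ 5 = 1" and "z \<noteq> 1"
    using primitive_root_of_unityD(1)[OF assms] primitive_root_of_unityD(2)[OF assms, of 1]
    by simp_all
  have "(z - 1) * (1 + z + z\<^sup>2 + z ^ 3 + z ^ 4) = z ^ 5 - 1"
    by algebra
  then have rel: "1 + z + z\<^sup>2 + z ^ 3 + z ^ 4 = 0"
    using zn \<open>z \<noteq> 1\<close> by simp
  have S: "mat2_apply (Sq z) (a, b) = (- (z ^ 4) * b, a)" for a b
    by (rule mat2_apply_Sq) (use zn in algebra)
  define W :: "(complex \<times> complex) set" where
    "W = {(1, 0), (0, 1), (1, 1), (1 + z, 1), (1 + z + z\<^sup>2 + z ^ 3, 1), (1 + z + z\<^sup>2, 1),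
      (1 + z + z\<^sup>2 + z ^ 3, 1 + z), (1 + z + z\<^sup>2 + z ^ 3, 1 + z + z\<^sup>2), (z + z\<^sup>2, 1 + z + z\<^sup>2),
      (1 + z + 2 * z\<^sup>2 + z ^ 3, 1 + z + z\<^sup>2), (z\<^sup>2 + z ^ 3, z + z\<^sup>2),
      (z\<^sup>2 + z ^ 3, 1 + z + 2 * z\<^sup>2 + z ^ 3)}"
  show ?thesis
  proof (rule finite_Spoly_values_of_invariant[of z 5 W])
    show "\<forall>w\<in>W. mat2_apply (Rq z) w \<in> root_multiples z W"
      unfolding W_def ball_simps mat2_apply_Rq
      apply (intro conjI TrueI)
      subgoal by (rule root_multiplesI[where s = 1 and k = 1 and a = 1 and b = 0])
          ((use rel in algebra | simp | algebra)+)
      subgoal by (rule root_multiplesI[where s = 1 and k = 0 and a = 1 and b = 1])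
          ((use rel in algebra | simp | algebra)+)
      subgoal by (rule root_multiplesI[where s = 1 and k = 0 and a = "1 + z" and b = 1])
          ((use rel in algebra | simp | algebra)+)
      subgoal by (rule root_multiplesI[where s = 1 and k = 0 and a = "1 + z + z\<^sup>2" and b = 1])
          ((use rel in algebra | simp | algebra)+)
      subgoal by (rule root_multiplesI[where s = 1 and k = 0 and a = 0 and b = 1])
          ((use rel in algebra | simp | algebra)+)
      subgoal by (rule root_multiplesI[where s = 1 and k = 0
            and a = "1 + z + z\<^sup>2 + z ^ 3" and b = 1])
          ((use rel in algebra | simp | algebra)+)
      subgoal by (rule root_multiplesI[where s = "- 1" and k = 2
            and a = "1 + z + z\<^sup>2 + z ^ 3" and b = "1 + z + z\<^sup>2"])
          ((use rel in algebra | simp | algebra)+)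
      subgoal by (rule root_multiplesI[where s = 1 and k = 0
            and a = "z + z\<^sup>2" and b = "1 + z + z\<^sup>2"])
          ((use rel in algebra | simp | algebra)+)
      subgoal by (rule root_multiplesI[where s = 1 and k = 0
            and a = "1 + z + 2 * z\<^sup>2 + z ^ 3" and b = "1 + z + z\<^sup>2"])
          ((use rel in algebra | simp | algebra)+)
      subgoal by (rule root_multiplesI[where s = "- 1" and k = 2
            and a = "z\<^sup>2 + z ^ 3" and b = "z + z\<^sup>2"])
          ((use rel in algebra | simp | algebra)+)
      subgoal by (rule root_multiplesI[where s = 1 and k = 1
            and a = "1 + z + z\<^sup>2 + z ^ 3" and b = "1 + z"])
          ((use rel in algebra | simp | algebra)+)
      subgoal by (rule root_multiplesI[where s = 1 and k = 0
            and a = "z\<^sup>2 + z ^ 3" and b = "1 + z + 2 * z\<^sup>2 + z ^ 3"])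
          ((use rel in algebra | simp | algebra)+)
      done
    show "\<forall>w\<in>W. mat2_apply (Sq z) w \<in> root_multiples z W"
      unfolding W_def ball_simps S
      apply (intro conjI TrueI)
      subgoal by (rule root_multiplesI[where s = 1 and k = 0 and a = 0 and b = 1])
          ((use rel in algebra | simp | algebra)+)
      subgoal by (rule root_multiplesI[where s = "- 1" and k = 4 and a = 1 and b = 0])
          ((use rel in algebra | simp | algebra)+)
      subgoal by (rule root_multiplesI[where s = 1 and k = 0
            and a = "1 + z + z\<^sup>2 + z ^ 3" and b = 1])
          ((use rel in algebra | simp | algebra)+)
      subgoal by (rule root_multiplesI[where s = 1 and k = 0
            and a = "1 + z + z\<^sup>2 + z ^ 3" and b = "1 + z"])
          ((use rel in algebra | simp | algebra)+)
      subgoal by (rule root_multiplesI[where s = "- 1" and k = 4 and a = 1 and b = 1])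
          ((use rel in algebra | simp | algebra)+)
      subgoal by (rule root_multiplesI[where s = 1 and k = 0
            and a = "1 + z + z\<^sup>2 + z ^ 3" and b = "1 + z + z\<^sup>2"])
          ((use rel in algebra | simp | algebra)+)
      subgoal by (rule root_multiplesI[where s = "- 1" and k = 4 and a = "1 + z" and b = 1])
          ((use rel in algebra | simp | algebra)+)
      subgoal by (rule root_multiplesI[where s = "- 1" and k = 4 and a = "1 + z + z\<^sup>2" and b = 1])
          ((use rel in algebra | simp | algebra)+)
      subgoal by (rule root_multiplesI[where s = 1 and k = 0
            and a = "z\<^sup>2 + z ^ 3" and b = "z + z\<^sup>2"])
          ((use rel in algebra | simp | algebra)+)
      subgoal by (rule root_multiplesI[where s = 1 and k = 0
            and a = "z\<^sup>2 + z ^ 3" and b = "1 + z + 2 * z\<^sup>2 + z ^ 3"])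
          ((use rel in algebra | simp | algebra)+)
      subgoal by (rule root_multiplesI[where s = "- 1" and k = 4
            and a = "z + z\<^sup>2" and b = "1 + z + z\<^sup>2"])
          ((use rel in algebra | simp | algebra)+)
      subgoal by (rule root_multiplesI[where s = "- 1" and k = 4
            and a = "1 + z + 2 * z\<^sup>2 + z ^ 3" and b = "1 + z + z\<^sup>2"])
          ((use rel in algebra | simp | algebra)+)
      done
  qed (simp_all add: zn W_def)
qed

theorem corollary4p2:
  fixes \<zeta> :: complex
  assumes "\<zeta> \<noteq> 0"
  shows "finite {Spoly x \<zeta> | x :: rat. x > 1} \<longleftrightarrow>
         (\<exists>n\<in>{2, 3, 4, 5}. primitive_root_of_unity n \<zeta>)"
proof
  assume fin: "finite {Spoly x \<zeta> | x :: rat. x > 1}"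
  then obtain m where "0 < m" "\<zeta> ^ m = 1" and "\<zeta> \<noteq> 1"
    using infinite_Spoly_values_non_root_of_unity[OF assms] by blast
  then obtain n where prim: "primitive_root_of_unity n \<zeta>"
    using primitive_root_of_unity_Least by blast
  then have "n \<noteq> 0" "n \<noteq> 1"
    using \<open>\<zeta> \<noteq> 1\<close> by (auto simp: primitive_root_of_unity_def)
  moreover have "n \<noteq> 6" "\<not> 7 \<le> n"
    using fin prim infinite_Spoly_values_order_6 infinite_Spoly_values_order_ge_7 by blast+
  ultimately show "\<exists>n\<in>{2, 3, 4, 5}. primitive_root_of_unity n \<zeta>"
    using prim by (intro bexI[of _ n]) auto
next
  assume "\<exists>n\<in>{2, 3, 4, 5}. primitive_root_of_unity n \<zeta>"
  then show "finite {Spoly x \<zeta> | x :: rat. x > 1}"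
    using finite_Spoly_values_order_2 finite_Spoly_values_order_3 finite_Spoly_values_order_4
      finite_Spoly_values_order_5 by blast
qed

end
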